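(* Let $X$ be a real Banach space and $Y$ a linear subspace of $X$ with a norm $\|\cdot\|_Y$ such that $K:=U(Y)=\{g\in Y:\|g\|_Y\le1\}$ is a compact subset of $X$, and let $C_0$ be a constant with $\|g\|_X\le C_0\|g\|_Y$ for all $g\in Y$. Let $\lambda_1,\dots,\lambda_m\in X^*$ with $\|\lambda_j\|_{X^*}=1$, let $f\in K$ and $w:=\lambda(f)$, and assume $R(K_w)_X\neq0$. For $\mu>0$ define on $X$ the loss $$\mathcal{L}_\mu(g):=\|\lambda(g)-w\|+\mu\|g\|_Y .$$ Let $C>2$. Let $\mu>0$ and $\delta>0$ satisfy $\delta\le\mu^2$ and $$\varepsilon+2R(K(w,2\varepsilon))_X\le C\,R(K_w)_X,\qquad \varepsilon:=\mu\max(C_0,1+\mu),$$ (such $\mu$ exist, namely every sufficiently small $\mu>0$ satisfies this). Let $\Sigma\subset X$ satisfy $\operatorname{dist}(K,\Sigma\cap K)_X<\delta$, and let $\hat f\in\mathop{\rm argmin}_{g\in\Sigma}\mathcal{L}_\mu(g)$ be any minimizer. Then $$\|f-\hat f\|_X\le C\,R(K_w)_X .$$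
   Context: Convention: $\|g\|_Y:=\infty$ for $g\in X\setminus Y$. For $g\in X$, $\lambda(g):=(\lambda_1(g),\dots,\lambda_m(g))$; on $\mathbb{R}^m$, $\|v\|:=\big[\frac1m\sum_{j=1}^m|v_j|^2\big]^{1/2}$. For $A,B\subset X$, $\operatorname{dist}(A,B)_X:=\sup_{a\in A}\inf_{b\in B}\|a-b\|_X$. $K_w:=\{h\in K:\lambda(h)=w\}$, $K(w,\varepsilon):=\bigcup_{w'\in\mathbb{R}^m,\ \|w'-w\|\le\varepsilon}K_{w'}$. For $S\subset X$, $R(S)_X:=\inf\{r:\ S\subset B(z,r)_X\text{ for some }z\in X\}$ (Chebyshev radius), with $B(z,r)_X$ the ball of center $z$, radius $r$. *)

theory Defs
  imports "HOL-Analysis.Analysis"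
begin

text \<open>Vectors in R^m are represented as functions nat => real, only indices j < m matter.
  Normalised Euclidean norm on R^m.\<close>
definition vnorm :: "nat \<Rightarrow> (nat \<Rightarrow> real) \<Rightarrow> real" where
  "vnorm m v = sqrt ((1 / real m) * (\<Sum>j<m. (v j)\<^sup>2))"

definition fiber :: "nat \<Rightarrow> (nat \<Rightarrow> 'a \<Rightarrow> real) \<Rightarrow> 'a set \<Rightarrow> (nat \<Rightarrow> real) \<Rightarrow> 'a set" where
  "fiber m lam K w = {h \<in> K. \<forall>j<m. lam j h = w j}"

definition fiber_nbhd :: "nat \<Rightarrow> (nat \<Rightarrow> 'a \<Rightarrow> real) \<Rightarrow> 'a set \<Rightarrow> (nat \<Rightarrow> real) \<Rightarrow> real \<Rightarrow> 'a set" where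
  "fiber_nbhd m lam K w eps =
     (\<Union>w'\<in>{w'. vnorm m (\<lambda>j. w' j - w j) \<le> eps}. fiber m lam K w')"

definition cheb_radius :: "'a::real_normed_vector set \<Rightarrow> real" where
  "cheb_radius S = Inf {r. \<exists>z. S \<subseteq> cball z r}"

definition set_dist :: "'a::real_normed_vector set \<Rightarrow> 'a set \<Rightarrow> ereal" where
  "set_dist A B = (SUP a\<in>A. INF b\<in>B. ereal (norm (a - b)))"

definition loss :: "nat \<Rightarrow> (nat \<Rightarrow> 'a \<Rightarrow> real) \<Rightarrow> (nat \<Rightarrow> real) \<Rightarrow> 'a set \<Rightarrow> ('a \<Rightarrow> real)
                    \<Rightarrow> real \<Rightarrow> 'a \<Rightarrow> ereal" where
  "loss m lam w Y nY \<mu> g =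
     (if g \<in> Y then ereal (vnorm m (\<lambda>j. lam j g - w j) + \<mu> * nY g) else \<infinity>)"

end

theory Submission
  imports Defs
begin

text \<open>A point \<open>g \<in> \<Sigma>\<close> within \<open>\<delta>\<close> of \<open>f\<close> has loss at most \<open>\<delta> + \<mu> \<le> \<mu> (1 + \<mu>)\<close>, so the
  minimizer \<open>fhat\<close> lies in \<open>Y\<close> with residual \<open>\<parallel>\<lambda>(fhat) - w\<parallel> \<le> \<epsilon>\<close> and \<open>\<parallel>fhat\<parallel>\<^sub>Y \<le> 1 + \<mu>\<close>.
  Shrinking \<open>fhat\<close> into the unit ball \<open>K\<close> moves it by at most \<open>C\<^sub>0 \<mu> \<le> \<epsilon>\<close> in \<open>X\<close>, and the shrunk
  point \<open>h\<close> has residual at most \<open>2\<epsilon>\<close>. Thus \<open>f\<close> and \<open>h\<close> both lie in \<open>K(w, 2\<epsilon>)\<close>, and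
  \<open>\<parallel>f - fhat\<parallel> \<le> \<parallel>f - h\<parallel> + \<epsilon> \<le> 2 R(K(w, 2\<epsilon>)) + \<epsilon> \<le> C R(K\<^sub>w)\<close>.\<close>

lemma vnorm_nonneg: "0 \<le> vnorm m v"
  unfolding vnorm_def by (simp add: sum_nonneg)

lemma vnorm_eq_L2_set: "vnorm m v = sqrt (1 / real m) * L2_set v {..<m}"
  unfolding vnorm_def L2_set_def by (metis real_sqrt_mult)

lemma vnorm_triangle: "vnorm m (\<lambda>j. u j + v j) \<le> vnorm m u + vnorm m v"
proof -
  have "L2_set (\<lambda>j. u j + v j) {..<m} \<le> L2_set u {..<m} + L2_set v {..<m}"
    by (rule L2_set_triangle_ineq)
  then show ?thesis
    unfolding vnorm_eq_L2_set by (simp add: mult_left_mono flip: distrib_left)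
qed

lemma vnorm_le:
  assumes "m \<ge> 1" and "\<forall>j<m. \<bar>v j\<bar> \<le> B"
  shows "vnorm m v \<le> B"
proof -
  have B: "0 \<le> B" using assms by force
  have "(\<Sum>j<m. (v j)\<^sup>2) \<le> (\<Sum>j<m. B\<^sup>2)"
    using assms(2) B by (intro sum_mono) (simp flip: abs_le_square_iff)
  then have "(1 / real m) * (\<Sum>j<m. (v j)\<^sup>2) \<le> B\<^sup>2"
    using assms(1) by (simp add: field_simps)
  then show ?thesis
    unfolding vnorm_def by (rule real_le_lsqrt[OF B])
qed

lemma vnorm_functionals_diff_le_norm:
  assumes "m \<ge> 1"
    and "\<forall>j<m. bounded_linear (lam j)" and "\<forall>j<m. onorm (lam j) \<le> 1"
  shows "vnorm m (\<lambda>j. lam j x - lam j y) \<le> norm (x - y)"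
proof (rule vnorm_le[OF assms(1)], intro allI impI)
  fix j assume j: "j < m"
  have "lam j x - lam j y = lam j (x - y)"
    using assms(2) j by (simp add: linear_diff bounded_linear.linear)
  also have "\<bar>\<dots>\<bar> \<le> onorm (lam j) * norm (x - y)"
    using onorm[of "lam j"] assms(2) j by simp
  also have "\<dots> \<le> norm (x - y)"
    using assms(2,3) j by (simp add: mult_left_le_one_le onorm_pos_le)
  finally show "\<bar>lam j x - lam j y\<bar> \<le> norm (x - y)" .
qed

lemma vnorm_residual_le:
  assumes "m \<ge> 1"
    and "\<forall>j<m. bounded_linear (lam j)" and "\<forall>j<m. onorm (lam j) \<le> 1"
  shows "vnorm m (\<lambda>j. lam j x - w j) \<le> norm (x - y) + vnorm m (\<lambda>j. lam j y - w j)"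
proof -
  have "vnorm m (\<lambda>j. lam j x - w j) \<le> vnorm m (\<lambda>j. lam j x - lam j y) + vnorm m (\<lambda>j. lam j y - w j)"
    using vnorm_triangle[of m "\<lambda>j. lam j x - lam j y" "\<lambda>j. lam j y - w j"] by simp
  then show ?thesis
    using vnorm_functionals_diff_le_norm[OF assms, of x y] by linarith
qed

lemma norm_diff_le_two_cheb_radius:
  fixes S :: "'a::real_normed_vector set"
  assumes "bounded S" and "a \<in> S" and "b \<in> S"
  shows "norm (a - b) \<le> 2 * cheb_radius S"
proof -
  have "norm (a - b) / 2 \<le> cheb_radius S"
    unfolding cheb_radius_def
  proof (rule cInf_greatest)
    show "{r. \<exists>z. S \<subseteq> cball z r} \<noteq> {}"
      using assms(1) by (auto simp: bounded_subset_cball)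
  next
    fix r assume "r \<in> {r. \<exists>z. S \<subseteq> cball z r}"
    then obtain z where "S \<subseteq> cball z r" by blast
    then have "dist z a \<le> r" "dist z b \<le> r" using assms by auto
    then show "norm (a - b) / 2 \<le> r"
      using dist_triangle[of a b z] by (simp add: dist_norm dist_commute norm_minus_commute)
  qed
  then show ?thesis by simp
qed

lemma fiber_nbhd_subset: "fiber_nbhd m lam K w e \<subseteq> K"
  unfolding fiber_nbhd_def fiber_def by blast

lemma fiber_nbhdI:
  assumes "h \<in> K" and "vnorm m (\<lambda>j. lam j h - w j) \<le> e"
  shows "h \<in> fiber_nbhd m lam K w e"
  unfolding fiber_nbhd_def fiber_def
  using assms by (intro UN_I[where a = "\<lambda>j. lam j h"]) auto

lemma fiber_nbhd_self:
  assumes "h \<in> K" and "0 \<le> e"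
  shows "h \<in> fiber_nbhd m lam K (\<lambda>j. lam j h) e"
  using assms by (intro fiber_nbhdI) (simp_all add: vnorm_def)

lemma set_dist_less_obtains_close:
  assumes "set_dist A B < ereal d" and "a \<in> A"
  obtains b where "b \<in> B" and "norm (a - b) < d"
proof -
  have "(INF b\<in>B. ereal (norm (a - b))) < ereal d"
    using assms unfolding set_dist_def by (meson SUP_upper order.strict_trans1)
  then show thesis
    using that by (auto simp: INF_less_iff)
qed

lemma loss_le_lossD:
  assumes "loss m lam w Y nY \<mu> f \<le> loss m lam w Y nY \<mu> g" and "g \<in> Y"
  shows "f \<in> Y"
    and "vnorm m (\<lambda>j. lam j f - w j) + \<mu> * nY f \<le> vnorm m (\<lambda>j. lam j g - w j) + \<mu> * nY g"
  using assms unfolding loss_def by (auto split: if_splits)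

text \<open>Radial retraction of \<open>Y\<close> onto its unit ball; it moves \<open>g\<close> by \<open>(\<parallel>g\<parallel>\<^sub>Y - 1) g / \<parallel>g\<parallel>\<^sub>Y\<close>.\<close>

lemma exists_unit_ball_point_near:
  fixes Y :: "'a::real_normed_vector set"
  assumes "subspace Y"
    and nY_scale: "\<forall>g\<in>Y. \<forall>c. nY (c *\<^sub>R g) = \<bar>c\<bar> * nY g"
    and C0: "\<forall>g\<in>Y. norm g \<le> C0 * nY g"
    and "g \<in> Y"
  obtains h where "h \<in> Y" and "nY h \<le> 1" and "norm (g - h) \<le> C0 * max 0 (nY g - 1)"
proof (cases "nY g \<le> 1")
  case True
  then show thesis using that[of g] assms(4) by simp
next
  case False
  define s where "s = nY g"
  have s: "s > 1" using False s_def by simp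
  let ?h = "(1 / s) *\<^sub>R g"
  have "?h \<in> Y" and "(1 - 1 / s) *\<^sub>R g \<in> Y"
    using assms(1,4) by (simp_all add: subspace_scale)
  moreover have "nY ?h = 1"
    using nY_scale assms(4) s s_def by simp
  moreover have "g - ?h = (1 - 1 / s) *\<^sub>R g"
    by (simp add: algebra_simps)
  moreover have "nY ((1 - 1 / s) *\<^sub>R g) = s - 1"
    using nY_scale assms(4) s s_def by (simp add: field_simps)
  ultimately show thesis
    using that[of ?h] C0 s s_def by force
qed

lemma minimizer_loss_bound:
  assumes "m \<ge> 1"
    and lam: "\<forall>j<m. bounded_linear (lam j)" "\<forall>j<m. onorm (lam j) \<le> 1"
    and w: "w = (\<lambda>j. lam j f)"
    and "\<mu> \<ge> 0"
    and g: "g \<in> \<Sigma>" "g \<in> Y" "nY g \<le> 1" "norm (f - g) \<le> \<mu>\<^sup>2"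
    and min: "\<forall>g\<in>\<Sigma>. loss m lam w Y nY \<mu> fhat \<le> loss m lam w Y nY \<mu> g"
  shows "fhat \<in> Y"
    and "vnorm m (\<lambda>j. lam j fhat - w j) + \<mu> * nY fhat \<le> \<mu> * (1 + \<mu>)"
proof -
  have fhat: "loss m lam w Y nY \<mu> fhat \<le> loss m lam w Y nY \<mu> g"
    using min g(1) by blast
  show "fhat \<in> Y"
    using loss_le_lossD(1)[OF fhat g(2)] .
  have "vnorm m (\<lambda>j. lam j g - w j) \<le> norm (g - f)"
    unfolding w by (rule vnorm_functionals_diff_le_norm[OF assms(1) lam])
  moreover have "\<mu> * nY g \<le> \<mu>"
    using g(3) \<open>\<mu> \<ge> 0\<close> by (simp add: mult_left_le)
  ultimately show "vnorm m (\<lambda>j. lam j fhat - w j) + \<mu> * nY fhat \<le> \<mu> * (1 + \<mu>)"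
    using loss_le_lossD(2)[OF fhat g(2)] g(4)
    by (simp add: norm_minus_commute algebra_simps power2_eq_square)
qed

lemma minimizer_near_fiber_nbhd:
  fixes Y :: "'a::real_normed_vector set"
  assumes "subspace Y"
    and nY_nonneg: "\<forall>g\<in>Y. 0 \<le> nY g"
    and nY_scale: "\<forall>g\<in>Y. \<forall>c. nY (c *\<^sub>R g) = \<bar>c\<bar> * nY g"
    and C0: "\<forall>g\<in>Y. norm g \<le> C0 * nY g"
    and m: "m \<ge> 1"
    and lam: "\<forall>j<m. bounded_linear (lam j)" "\<forall>j<m. onorm (lam j) \<le> 1"
    and w: "w = (\<lambda>j. lam j f)"
    and \<mu>: "\<mu> > 0"
    and \<epsilon>: "\<epsilon> = \<mu> * max C0 (1 + \<mu>)"
    and g: "g \<in> \<Sigma>" "g \<in> Y" "nY g \<le> 1" "norm (f - g) \<le> \<mu>\<^sup>2"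
    and min: "\<forall>g\<in>\<Sigma>. loss m lam w Y nY \<mu> fhat \<le> loss m lam w Y nY \<mu> g"
  obtains h where "h \<in> fiber_nbhd m lam {g \<in> Y. nY g \<le> 1} w (2 * \<epsilon>)"
    and "norm (fhat - h) \<le> \<epsilon>"
proof -
  note fhat_bounds = minimizer_loss_bound[OF m lam w less_imp_le[OF \<mu>] g min]
  have fhat_Y: "fhat \<in> Y" by (fact fhat_bounds)
  have "\<mu> * (1 + \<mu>) \<le> \<epsilon>"
    unfolding \<epsilon> using \<mu> by (simp add: mult_left_mono)
  moreover have "0 \<le> \<mu> * nY fhat"
    using nY_nonneg fhat_Y \<mu> by simp
  ultimately have residual: "vnorm m (\<lambda>j. lam j fhat - w j) \<le> \<epsilon>"
    using fhat_bounds(2) by linarith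
  have "\<mu> * nY fhat \<le> \<mu> * (1 + \<mu>)"
    using fhat_bounds(2) vnorm_nonneg[of m "\<lambda>j. lam j fhat - w j"] by linarith
  then have "max 0 (nY fhat - 1) \<le> \<mu>"
    using \<mu> by simp
  obtain h where h: "h \<in> Y" "nY h \<le> 1" and near: "norm (fhat - h) \<le> C0 * max 0 (nY fhat - 1)"
    by (rule exists_unit_ball_point_near[OF assms(1) nY_scale C0 fhat_Y])
  note near
  also have "\<dots> \<le> max C0 (1 + \<mu>) * max 0 (nY fhat - 1)"
    by (rule mult_right_mono) simp_all
  also have "\<dots> \<le> max C0 (1 + \<mu>) * \<mu>"
    by (rule mult_left_mono) (use \<open>max 0 (nY fhat - 1) \<le> \<mu>\<close> \<mu> in auto)
  finally have fhat_h: "norm (fhat - h) \<le> \<epsilon>"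
    unfolding \<epsilon> by (simp add: mult.commute)
  have "vnorm m (\<lambda>j. lam j h - w j) \<le> 2 * \<epsilon>"
    using vnorm_residual_le[OF m lam, where x = h and y = fhat and w = w] fhat_h residual
    by (simp add: norm_minus_commute)
  with h have "h \<in> fiber_nbhd m lam {g \<in> Y. nY g \<le> 1} w (2 * \<epsilon>)"
    by (intro fiber_nbhdI) simp_all
  then show thesis using fhat_h by (rule that)
qed

theorem theorem3p1:
  fixes Y :: "'a::banach set" and nY :: "'a \<Rightarrow> real"
    and C0 :: real and m :: nat and lam :: "nat \<Rightarrow> 'a \<Rightarrow> real"
    and f :: 'a and w :: "nat \<Rightarrow> real"
    and C \<mu> \<delta> \<epsilon> :: real and \<Sigma> :: "'a set" and fhat :: 'a
  assumes Ysub: "subspace Y"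
    and nY_nonneg: "\<forall>g\<in>Y. 0 \<le> nY g"
    and nY_zero: "\<forall>g\<in>Y. nY g = 0 \<longleftrightarrow> g = 0"
    and nY_scale: "\<forall>g\<in>Y. \<forall>c. nY (c *\<^sub>R g) = \<bar>c\<bar> * nY g"
    and nY_tri: "\<forall>g\<in>Y. \<forall>h\<in>Y. nY (g + h) \<le> nY g + nY h"
    and K_compact: "compact {g \<in> Y. nY g \<le> 1}"
    and C0: "\<forall>g\<in>Y. norm g \<le> C0 * nY g"
    and m_pos: "m \<ge> 1"
    and lam_lin: "\<forall>j<m. bounded_linear (lam j)"
    and lam_norm: "\<forall>j<m. onorm (lam j) = 1"
    and f_in: "f \<in> {g \<in> Y. nY g \<le> 1}"
    and w_def: "w = (\<lambda>j. lam j f)"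
    and R_nz: "cheb_radius (fiber m lam {g \<in> Y. nY g \<le> 1} w) \<noteq> 0"
    and C_gt: "C > 2"
    and mu_pos: "\<mu> > 0" and delta_pos: "\<delta> > 0" and delta_le: "\<delta> \<le> \<mu>\<^sup>2"
    and eps_def: "\<epsilon> = \<mu> * max C0 (1 + \<mu>)"
    and mu_cond: "\<epsilon> + 2 * cheb_radius (fiber_nbhd m lam {g \<in> Y. nY g \<le> 1} w (2 * \<epsilon>))
                  \<le> C * cheb_radius (fiber m lam {g \<in> Y. nY g \<le> 1} w)"
    and Sigma_dense: "set_dist {g \<in> Y. nY g \<le> 1} (\<Sigma> \<inter> {g \<in> Y. nY g \<le> 1}) < ereal \<delta>"
    and fhat_min: "fhat \<in> \<Sigma>" "\<forall>g\<in>\<Sigma>. loss m lam w Y nY \<mu> fhat \<le> loss m lam w Y nY \<mu> g"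
  shows "norm (f - fhat) \<le> C * cheb_radius (fiber m lam {g \<in> Y. nY g \<le> 1} w)"
proof -
  define K where "K = {g \<in> Y. nY g \<le> 1}"
  define N where "N = fiber_nbhd m lam K w (2 * \<epsilon>)"
  have lam_le: "\<forall>j<m. onorm (lam j) \<le> 1"
    using lam_norm by simp
  obtain g where g: "g \<in> \<Sigma> \<inter> K" "norm (f - g) < \<delta>"
    using Sigma_dense f_in unfolding K_def[symmetric] by (rule set_dist_less_obtains_close)
  then have g_near: "g \<in> \<Sigma>" "g \<in> Y" "nY g \<le> 1" "norm (f - g) \<le> \<mu>\<^sup>2"
    using delta_le unfolding K_def by auto
  obtain h where "h \<in> N" and fhat_h: "norm (fhat - h) \<le> \<epsilon>"
    unfolding N_def K_def
    by (rule minimizer_near_fiber_nbhd[OF Ysub nY_nonneg nY_scale C0 m_pos lam_lin lam_le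
          w_def mu_pos eps_def g_near fhat_min(2)])
  moreover have "f \<in> N"
    unfolding N_def w_def using f_in eps_def mu_pos
    by (intro fiber_nbhd_self) (auto simp: K_def)
  moreover have "bounded N"
    unfolding N_def K_def
    by (rule bounded_subset[OF compact_imp_bounded[OF K_compact] fiber_nbhd_subset])
  ultimately have "norm (f - h) \<le> 2 * cheb_radius N"
    by (intro norm_diff_le_two_cheb_radius)
  then show ?thesis
    using mu_cond fhat_h norm_triangle_ineq[of "f - h" "h - fhat"]
    unfolding N_def K_def by (simp add: norm_minus_commute)
qed

end
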